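(* Let $\ell$ be a prime, $L$ a finite extension of $\mathbb Q_\ell$, $\tau$ a field automorphism of $L$ of order $2$, $L^\tau$ its fixed field, $\lambda$ a uniformizer of $L^\tau$, and $v_\lambda$ the valuation on $\overline{\mathbb Q_\ell}$ normalized by $v_\lambda(\lambda)=1$. Let $C=\{x\in\mathcal O_L^\times: x\tau(x)=1\}$ and, for $n\ge0$, $C(n)=\{x\in C: v_\lambda(x-1)\ge n\}$. If $\ell\neq2$, then for every $n\ge1$ the quotient $C(n)/C(n+1)$ has order $|\mathcal O_{L^\tau}/\lambda\mathcal O_{L^\tau}|$. If $\ell=2$, the same holds for every $n>v_\lambda(2)$. *)

theory Defs
  imports Complex_Main "HOL-Computational_Algebra.Primes"
begin

definition padic_abs_rat :: "nat \<Rightarrow> rat \<Rightarrow> real" where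
  "padic_abs_rat l r = (if r = 0 then 0 else
     (case quotient_of r of (a, b) \<Rightarrow>
        real l powi (int (multiplicity (int l) b) - int (multiplicity (int l) a))))"

definition is_absval :: "('a::field \<Rightarrow> real) \<Rightarrow> bool" where
  "is_absval f \<longleftrightarrow> (\<forall>x. 0 \<le> f x) \<and> (\<forall>x. f x = 0 \<longleftrightarrow> x = 0) \<and>
     (\<forall>x y. f (x * y) = f x * f y) \<and> (\<forall>x y. f (x + y) \<le> f x + f y)"

definition absval_complete :: "('a::field \<Rightarrow> real) \<Rightarrow> bool" where
  "absval_complete f \<longleftrightarrow> (\<forall>X :: nat \<Rightarrow> 'a.
     (\<forall>e>0. \<exists>N. \<forall>m\<ge>N. \<forall>n\<ge>N. f (X m - X n) < e) \<longrightarrow>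
     (\<exists>y. (\<lambda>n. f (X n - y)) \<longlonglongrightarrow> 0))"

text \<open>The closure of the prime field Q inside L; when L is complete and the absolute value
  extends the l-adic one, this is (a copy of) Q_l.\<close>
definition closure_of_rat :: "('a::field_char_0 \<Rightarrow> real) \<Rightarrow> 'a set" where
  "closure_of_rat f = {x. \<forall>e>0. \<exists>q. f (x - of_rat q) < e}"

definition finite_dim_over :: "'a::field set \<Rightarrow> bool" where
  "finite_dim_over K \<longleftrightarrow> (\<exists>B. finite B \<and>
     (\<forall>x. \<exists>c. (\<forall>b\<in>B. c b \<in> K) \<and> x = (\<Sum>b\<in>B. c b * b)))"

text \<open>L with absolute value f is a finite extension of Q_l (with its unique extended absolute value).\<close>
definition finite_ext_Ql :: "nat \<Rightarrow> ('a::field_char_0 \<Rightarrow> real) \<Rightarrow> bool" where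
  "finite_ext_Ql l f \<longleftrightarrow> is_absval f \<and> (\<forall>q. f (of_rat q) = padic_abs_rat l q) \<and>
     absval_complete f \<and> finite_dim_over (closure_of_rat f)"

definition field_aut_order2 :: "('a::field \<Rightarrow> 'a) \<Rightarrow> bool" where
  "field_aut_order2 t \<longleftrightarrow> bij t \<and> (\<forall>x y. t (x + y) = t x + t y) \<and>
     (\<forall>x y. t (x * y) = t x * t y) \<and> t 1 = 1 \<and> t \<noteq> id \<and> t \<circ> t = id"

definition fixed_field :: "('a \<Rightarrow> 'a) \<Rightarrow> 'a set" where
  "fixed_field t = {x. t x = x}"

definition int_ring_fixed :: "('a::field \<Rightarrow> real) \<Rightarrow> ('a \<Rightarrow> 'a) \<Rightarrow> 'a set" where
  "int_ring_fixed f t = {x \<in> fixed_field t. f x \<le> 1}"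

definition is_uniformizer :: "('a::field \<Rightarrow> real) \<Rightarrow> ('a \<Rightarrow> 'a) \<Rightarrow> 'a \<Rightarrow> bool" where
  "is_uniformizer f t lam \<longleftrightarrow> lam \<in> int_ring_fixed f t \<and>
     {y \<in> int_ring_fixed f t. f y < 1} = {lam * z | z. z \<in> int_ring_fixed f t}"

definition residue_classes :: "('a::field \<Rightarrow> real) \<Rightarrow> ('a \<Rightarrow> 'a) \<Rightarrow> 'a \<Rightarrow> 'a set set" where
  "residue_classes f t lam = (\<lambda>x. {y \<in> int_ring_fixed f t. \<exists>z \<in> int_ring_fixed f t. y - x = lam * z})
       ` int_ring_fixed f t"

definition Cgrp :: "('a::field \<Rightarrow> real) \<Rightarrow> ('a \<Rightarrow> 'a) \<Rightarrow> 'a set" where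
  "Cgrp f t = {x. f x = 1 \<and> x * t x = 1}"

text \<open>C(n) = {x in C : v_lam(x - 1) \<ge> n}, i.e. |x - 1| \<le> |lam|^n.\<close>
definition Cfilt :: "('a::field \<Rightarrow> real) \<Rightarrow> ('a \<Rightarrow> 'a) \<Rightarrow> 'a \<Rightarrow> nat \<Rightarrow> 'a set" where
  "Cfilt f t lam n = {x \<in> Cgrp f t. f (x - 1) \<le> f lam ^ n}"

definition Cquot :: "('a::field \<Rightarrow> real) \<Rightarrow> ('a \<Rightarrow> 'a) \<Rightarrow> 'a \<Rightarrow> nat \<Rightarrow> 'a set set" where
  "Cquot f t lam n = (\<lambda>x. (\<lambda>c. x * c) ` Cfilt f t lam (Suc n)) ` Cfilt f t lam n"

end

theory Submission
  imports Defs
begin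

text \<open>
  Cayley transform: for a \<open>t\<close>-skew \<open>w \<noteq> 0\<close> of suitable absolute value, the map
  \<open>x \<mapsto> (x - 1) / ((x + 1) w)\<close> is a bijection from \<open>C(n)\<close> onto \<open>\<O>\<^bsub>L\<^sup>\<tau>\<^esub>\<close> as soon as
  \<open>|\<lambda>|\<^sup>n < |2|\<close>, because then \<open>|x + 1| = |2|\<close> on \<open>C(n)\<close>. The same computation shows that
  two elements of \<open>C(n)\<close> lie in one coset of \<open>C(n + 1)\<close> iff their images are congruent
  modulo \<open>\<lambda>\<close>, so \<open>C(n)/C(n + 1)\<close> is in bijection with \<open>\<O>\<^bsub>L\<^sup>\<tau>\<^esub>/\<lambda>\<close>. When \<open>\<ell> \<noteq> 2\<close> we have
  \<open>|2| = 1\<close>, so every \<open>n \<ge> 1\<close> qualifies.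

  The residue field is finite because \<open>L\<close> is finite-dimensional over the closure of \<open>\<rat>\<close>:
  elements of the unit ball whose residues are linearly independent over \<open>\<int>/\<ell>\<close> are linearly
  independent over that closure, so there are at most \<open>[L : \<rat>\<^sub>\<ell>]\<close> of them.
\<close>

section \<open>Absolute values\<close>

locale absval =
  fixes f :: "'a::field \<Rightarrow> real"
  assumes is_absval: "is_absval f"
begin

lemma nonneg [simp]: "0 \<le> f x"
  using is_absval unfolding is_absval_def by auto

lemma eq_0_iff [simp]: "f x = 0 \<longleftrightarrow> x = 0"
  using is_absval unfolding is_absval_def by auto

lemma not_less_0 [simp]: "\<not> f x < 0"
  using nonneg[of x] by linarith

lemma zero [simp]: "f 0 = 0"
  by simp

lemma pos_iff [simp]: "0 < f x \<longleftrightarrow> x \<noteq> 0"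
  using nonneg[of x] eq_0_iff[of x] by linarith

lemma mult [simp]: "f (x * y) = f x * f y"
  using is_absval unfolding is_absval_def by auto

lemma triangle: "f (x + y) \<le> f x + f y"
  using is_absval unfolding is_absval_def by auto

lemma one [simp]: "f 1 = 1"
  using mult[of 1 1] eq_0_iff[of 1] by (metis mult_cancel_left1 one_neq_zero)

lemma power [simp]: "f (x ^ n) = f x ^ n"
  by (induction n) auto

lemma inverse [simp]: "f (inverse x) = inverse (f x)"
proof (cases "x = 0")
  case False
  then have "f x * f (inverse x) = 1"
    using mult[of x "inverse x"] by simp
  then show ?thesis
    using inverse_unique by metis
qed simp

lemma divide [simp]: "f (x / y) = f x / f y"
  by (simp add: divide_inverse)

lemma minus [simp]: "f (- x) = f x"
proof -
  have "f (- 1) * f (- 1) = 1"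
    using mult[of "- 1" "- 1"] by simp
  then have "f (- 1) = 1"
    using nonneg[of "- 1"] by (auto simp flip: power2_eq_square simp: power2_eq_1_iff)
  then show ?thesis
    using mult[of "- 1" x] by simp
qed

lemma minus_commute: "f (x - y) = f (y - x)"
  by (metis minus_diff_eq minus)

lemma sum_le: "f (sum g A) \<le> (\<Sum>i\<in>A. f (g i))"
proof (induction A rule: infinite_finite_induct)
  case (insert x F)
  then show ?case
    using triangle[of "g x" "sum g F"] by simp
qed auto

text \<open>A polynomial bound \<open>f (x + y) ^ N \<le> (N + 1) M ^ N\<close> from the binomial expansion
  is incompatible with \<open>f (x + y) > M\<close>, since exponentials beat linear functions.\<close>
lemma ultrametric_of_nat_le_1:
  assumes nat_le_1: "\<And>n. f (of_nat n) \<le> 1"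
  shows "f (x + y) \<le> max (f x) (f y)"
proof (rule ccontr)
  define M where "M = max (f x) (f y)"
  assume "\<not> f (x + y) \<le> max (f x) (f y)"
  then have gt: "M < f (x + y)"
    unfolding M_def by (simp only: not_le)
  have "x \<noteq> 0 \<or> y \<noteq> 0"
    using gt unfolding M_def by auto
  then have M_pos: "0 < M"
    unfolding M_def by (metis pos_iff less_max_iff_disj)
  have bound: "f (x + y) ^ N \<le> (real N + 1) * M ^ N" for N
  proof -
    have "f (x + y) ^ N = f (\<Sum>k\<le>N. of_nat (N choose k) * x ^ k * y ^ (N - k))"
      by (subst binomial_ring[symmetric]) simp
    also have "\<dots> \<le> (\<Sum>k\<le>N. f (of_nat (N choose k)) * f x ^ k * f y ^ (N - k))"
      using sum_le[of "\<lambda>k. of_nat (N choose k) * x ^ k * y ^ (N - k)"] by simp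
    also have "\<dots> \<le> (\<Sum>k\<le>N. 1 * M ^ k * M ^ (N - k))"
      using nat_le_1 M_pos by (intro sum_mono mult_mono power_mono) (auto simp: M_def)
    also have "\<dots> = (real N + 1) * M ^ N"
      by (simp flip: power_add)
    finally show ?thesis .
  qed
  define r where "r = f (x + y) / M"
  have "1 < r"
    using gt M_pos unfolding r_def by simp
  then have "(\<lambda>N. real N / r ^ N + 1 / r ^ N) \<longlonglongrightarrow> 0 + 0"
    by (intro tendsto_add lim_n_over_pown LIMSEQ_divide_realpow_zero) auto
  then have "eventually (\<lambda>N. (real N + 1) / r ^ N < 1) sequentially"
    by (intro order_tendstoD(2)) (auto simp: add_divide_distrib)
  then obtain N where "(real N + 1) / r ^ N < 1"
    by (meson eventually_sequentially order_refl)
  moreover have "r ^ N \<le> real N + 1"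
    using bound[of N] M_pos by (simp add: r_def power_divide divide_le_eq)
  ultimately show False
    using \<open>1 < r\<close> by (simp add: divide_less_eq)
qed

end

locale nonarch_absval = absval +
  assumes ultrametric: "f (x + y) \<le> max (f x) (f y)"
begin

lemma ultrametric_diff: "f (x - y) \<le> max (f x) (f y)"
  using ultrametric[of x "- y"] by simp

lemma add_eq_dominant: "f y < f x \<Longrightarrow> f (x + y) = f x"
  using ultrametric[of x y] ultrametric[of "x + y" "- y"] by (auto simp: max_def split: if_splits)

lemma sum_less:
  assumes "\<And>i. i \<in> A \<Longrightarrow> f (g i) < c" and "0 < c"
  shows "f (sum g A) < c"
  using assms(1)
proof (induction A rule: infinite_finite_induct)
  case (insert x F)
  then have "f (g x) < c" "f (sum g F) < c"
    by auto
  then show ?case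
    using ultrametric[of "g x" "sum g F"] insert(1,2) by simp
qed (use assms(2) in auto)

lemma diff_less_cong:
  assumes "f (a - b) < c"
  shows "f (y - a) < c \<longleftrightarrow> f (y - b) < c"
  using ultrametric[of "y - a" "a - b"] ultrametric[of "y - b" "b - a"] assms minus_commute[of a b]
  by auto

lemma diff_le_cong:
  assumes "f (a - b) \<le> c"
  shows "f (y - a) \<le> c \<longleftrightarrow> f (y - b) \<le> c"
  using ultrametric[of "y - a" "a - b"] ultrametric[of "y - b" "b - a"] assms minus_commute[of a b]
  by auto

lemma open_ball_eq_iff:
  assumes "a \<in> S" "b \<in> S" "0 < c"
  shows "{y \<in> S. f (y - a) < c} = {y \<in> S. f (y - b) < c} \<longleftrightarrow> f (a - b) < c"
  using assms diff_less_cong[of a b c] by auto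

lemma closed_ball_eq_iff:
  assumes "a \<in> S" "b \<in> S" "0 \<le> c"
  shows "{y \<in> S. f (y - a) \<le> c} = {y \<in> S. f (y - b) \<le> c} \<longleftrightarrow> f (a - b) \<le> c"
  using assms diff_le_cong[of a b c] by auto

end

locale padic_absval = absval f for f :: "'a::field_char_0 \<Rightarrow> real" +
  fixes l :: nat
  assumes prime_l: "prime l"
    and of_rat_eq: "\<And>q. f (of_rat q) = padic_abs_rat l q"
begin

lemma of_int_eq_padic: "f (of_int z) = (if z = 0 then 0 else real l powi - int (multiplicity (int l) z))"
  using of_rat_eq[of "of_int z"] by (simp add: padic_abs_rat_def)

lemma of_int_le_1: "f (of_int z) \<le> 1"
  using prime_gt_1_nat[OF prime_l]
  by (auto simp: of_int_eq_padic power_int_minus inverse_le_1_iff intro!: one_le_power_int)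

lemma of_int_eq_1: "\<not> int l dvd z \<Longrightarrow> f (of_int z) = 1"
  by (auto simp: of_int_eq_padic not_dvd_imp_multiplicity_0)

lemma of_int_less_1_iff: "f (of_int z) < 1 \<longleftrightarrow> int l dvd z"
proof
  assume "int l dvd z"
  then obtain w where "z = int l * w" ..
  moreover have "f (of_nat l) < 1"
    using of_int_eq_padic[of "int l"] prime_l prime_gt_1_nat[OF prime_l]
    by (simp add: multiplicity_self prime_gt_1_int power_int_minus inverse_less_1_iff)
  ultimately show "f (of_int z) < 1"
    using mult_left_le[OF of_int_le_1[of w] nonneg[of "of_nat l"]] by simp
qed (metis of_int_eq_1 less_irrefl)

lemma two_eq_1:
  assumes "l \<noteq> 2"
  shows "f 2 = 1"
proof -
  have "\<not> int l dvd 2"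
    using assms prime_ge_2_nat[OF prime_l] by (auto dest: zdvd_imp_le)
  then show ?thesis
    using of_int_eq_1[of 2] by simp
qed

lemma of_int_mult_less_1: "int l dvd w \<Longrightarrow> f y \<le> 1 \<Longrightarrow> f (of_int w * y) < 1"
  using mult_right_le_one_le[of "f (of_int w)" "f y"] of_int_less_1_iff[of w] by simp

sublocale nonarch_absval
  using ultrametric_of_nat_le_1[OF of_int_le_1[where z = "int _", simplified]] by unfold_locales

lemma bezout_prime_l:
  assumes "\<not> int l dvd e"
  obtains u v where "u * e + v * int l = 1"
proof -
  have "coprime (int l) e"
    using prime_l assms by (intro prime_imp_coprime) auto
  then have "gcd e (int l) = 1"
    by (simp add: coprime_commute)
  then show ?thesis
    using bezout_int[of e "int l"] that by auto
qed

section \<open>The closure of the rationals\<close>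

abbreviation Ql :: "'a set" where
  "Ql \<equiv> closure_of_rat f"

lemma of_rat_in_Ql: "of_rat q \<in> Ql"
  unfolding closure_of_rat_def by (auto intro!: exI[of _ q])

lemma Ql_0: "0 \<in> Ql" and Ql_1: "1 \<in> Ql"
  using of_rat_in_Ql[of 0] of_rat_in_Ql[of 1] by simp_all

lemma Ql_uminus:
  assumes "x \<in> Ql"
  shows "- x \<in> Ql"
  unfolding closure_of_rat_def
proof safe
  fix e :: real
  assume "0 < e"
  then obtain q where "f (x - of_rat q) < e"
    using assms unfolding closure_of_rat_def by blast
  moreover have "- x - of_rat (- q) = - (x - of_rat q)"
    by (simp add: of_rat_minus)
  ultimately show "\<exists>q. f (- x - of_rat q) < e"
    by (metis minus)
qed

lemma Ql_add:
  assumes "x \<in> Ql" "y \<in> Ql"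
  shows "x + y \<in> Ql"
  unfolding closure_of_rat_def
proof safe
  fix e :: real
  assume "0 < e"
  then obtain q q' where "f (x - of_rat q) < e" "f (y - of_rat q') < e"
    using assms unfolding closure_of_rat_def by blast
  then have "f ((x - of_rat q) + (y - of_rat q')) < e"
    using ultrametric[of "x - of_rat q" "y - of_rat q'"] by simp
  then show "\<exists>q. f (x + y - of_rat q) < e"
    by (intro exI[of _ "q + q'"]) (simp add: of_rat_add algebra_simps)
qed

lemma Ql_mult:
  assumes "x \<in> Ql" "y \<in> Ql"
  shows "x * y \<in> Ql"
  unfolding closure_of_rat_def
proof safe
  fix e :: real
  assume e: "0 < e"
  have fx1: "0 < f x + 1"
    using nonneg[of x] by linarith
  then have "0 < e / (f x + 1)"
    using e by simp
  then obtain q' where q': "f (y - of_rat q') < e / (f x + 1)"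
    using assms(2) unfolding closure_of_rat_def by blast
  have fq1: "0 < f (of_rat q') + 1"
    using nonneg[of "of_rat q'"] by linarith
  then have "0 < e / (f (of_rat q') + 1)"
    using e by simp
  then obtain q where q: "f (x - of_rat q) < e / (f (of_rat q') + 1)"
    using assms(1) unfolding closure_of_rat_def by blast
  have "f x * f (y - of_rat q') \<le> f x * (e / (f x + 1))"
    using q' by (intro mult_left_mono) auto
  also have "\<dots> < e"
    using e by (simp add: field_simps add_pos_nonneg)
  finally have small1: "f (x * (y - of_rat q')) < e"
    by simp
  have "f (of_rat q') * f (x - of_rat q) \<le> f (of_rat q') * (e / (f (of_rat q') + 1))"
    using q by (intro mult_left_mono) auto
  also have "\<dots> < e"
    using e by (simp add: field_simps add_pos_nonneg)
  finally have small2: "f (of_rat q' * (x - of_rat q)) < e"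
    by simp
  have "x * y - of_rat (q * q') = x * (y - of_rat q') + of_rat q' * (x - of_rat q)"
    by (simp add: of_rat_mult algebra_simps)
  then have "f (x * y - of_rat (q * q')) < e"
    using ultrametric[of "x * (y - of_rat q')" "of_rat q' * (x - of_rat q)"] small1 small2 by simp
  then show "\<exists>q. f (x * y - of_rat q) < e" ..
qed

lemma Ql_divide_of_rat:
  assumes "x \<in> Ql" "q \<noteq> 0"
  shows "x / of_rat q \<in> Ql"
  unfolding closure_of_rat_def
proof safe
  fix e :: real
  assume "0 < e"
  then have "0 < e * f (of_rat q)"
    using assms(2) by simp
  then obtain q' where q': "f (x - of_rat q') < e * f (of_rat q)"
    using assms(1) unfolding closure_of_rat_def by blast
  have "x / of_rat q - of_rat (q' / q) = (x - of_rat q') / of_rat q"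
    using assms(2) by (simp add: of_rat_divide diff_divide_distrib)
  then have "f (x / of_rat q - of_rat (q' / q)) < e"
    using q' assms(2) by (simp add: divide_less_eq)
  then show "\<exists>q'. f (x / of_rat q - of_rat q') < e" ..
qed

text \<open>A rational \<open>a / b\<close> with \<open>f (a / b) \<le> 1\<close> has \<open>l \<nmid> b\<close>, so \<open>b\<close> is invertible
  modulo \<open>l\<close> and \<open>a / b\<close> is congruent to an integer.\<close>
lemma Ql_near_integer:
  assumes x: "x \<in> Ql" and fx: "f x \<le> 1"
  shows "\<exists>n::int. f (x - of_int n) < 1"
proof -
  obtain q where q: "f (x - of_rat q) < 1"
    using x zero_less_one unfolding closure_of_rat_def by blast
  have fq: "f (of_rat q) \<le> 1"
    using ultrametric_diff[of x "x - of_rat q"] q fx by simp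
  obtain a b where ab: "quotient_of q = (a, b)"
    by fastforce
  have b_pos: "0 < b" and cop: "coprime a b"
    using quotient_of_denom_pos[OF ab] quotient_of_coprime[OF ab] by auto
  have q_eq: "of_rat q = (of_int a / of_int b :: 'a)"
    using quotient_of_div[OF ab] by (simp add: of_rat_divide)
  have prime_l_int: "prime (int l)"
    using prime_l by simp
  have "\<not> int l dvd b"
  proof
    assume lb: "int l dvd b"
    then have "\<not> int l dvd a"
      using coprime_common_divisor[OF cop _ lb] prime_l_int not_prime_unit by blast
    then have "f (of_rat q) = 1 / f (of_int b)"
      using q_eq of_int_eq_1 by simp
    moreover have "0 < f (of_int b)" "f (of_int b) < 1"
      using b_pos lb of_int_less_1_iff by auto
    ultimately show False
      using fq by (simp add: divide_le_eq)
  qed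
  then obtain u v where uv: "u * b + v * int l = 1"
    by (rule bezout_prime_l)
  have eq: "of_rat q - of_int (a * u) = (of_int (a * v * int l) / of_int b :: 'a)"
  proof -
    have "(of_int u :: 'a) * of_int b = 1 - of_int v * of_nat l"
      using arg_cong[OF uv, of "of_int :: int \<Rightarrow> 'a"] by (simp add: algebra_simps)
    then show ?thesis
      unfolding q_eq using b_pos by (simp add: field_simps) (metis distrib_left mult_1_right)
  qed
  have "f (of_int (a * v * int l)) < 1"
    by (subst of_int_less_1_iff) simp
  then have "f (of_rat q - of_int (a * u)) < 1"
    unfolding eq using of_int_eq_1[OF \<open>\<not> int l dvd b\<close>] by (simp only: divide div_by_1)
  then have "f ((x - of_rat q) + (of_rat q - of_int (a * u))) < 1"
    using ultrametric[of "x - of_rat q" "of_rat q - of_int (a * u)"] q by simp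
  then have "f (x - of_int (a * u)) < 1"
    by simp
  then show ?thesis ..
qed

end

section \<open>Finiteness of the residue field\<close>

definition span_over :: "'a::field set \<Rightarrow> 'a set \<Rightarrow> 'a set" where
  "span_over K B = {x. \<exists>c. (\<forall>b\<in>B. c b \<in> K) \<and> x = (\<Sum>b\<in>B. c b * b)}"

lemma finite_dim_over_iff: "finite_dim_over K \<longleftrightarrow> (\<exists>B. finite B \<and> span_over K B = UNIV)"
  unfolding finite_dim_over_def span_over_def by (simp add: set_eq_iff)

context
  fixes K :: "'a::field set"
  assumes K_0: "0 \<in> K" and K_1: "1 \<in> K"
    and K_add: "\<And>a b. a \<in> K \<Longrightarrow> b \<in> K \<Longrightarrow> a + b \<in> K"
    and K_mult: "\<And>a b. a \<in> K \<Longrightarrow> b \<in> K \<Longrightarrow> a * b \<in> K"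
    and K_uminus: "\<And>a. a \<in> K \<Longrightarrow> - a \<in> K"
begin

lemma diff_in_subring: "a \<in> K \<Longrightarrow> b \<in> K \<Longrightarrow> a - b \<in> K"
  using K_add[OF _ K_uminus] by simp

lemma sum_in_subring: "(\<And>i. i \<in> A \<Longrightarrow> g i \<in> K) \<Longrightarrow> sum g A \<in> K"
  by (induction A rule: infinite_finite_induct) (auto intro: K_0 K_add)

lemma dependent_if_eliminated_dependent:
  assumes I: "finite I" "i0 \<in> I" and a0: "a0 \<in> K" "a0 \<noteq> 0" and e: "\<forall>i\<in>I. e i \<in> K"
    and c': "\<forall>i\<in>I - {i0}. c' i \<in> K" "\<exists>i\<in>I - {i0}. c' i \<noteq> 0"
    and rel: "(\<Sum>i\<in>I - {i0}. c' i * (a0 * v i - e i * v i0)) = 0"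
  shows "\<exists>c. (\<forall>i\<in>I. c i \<in> K) \<and> (\<exists>i\<in>I. c i \<noteq> 0) \<and> (\<Sum>i\<in>I. c i * v i) = 0"
proof (intro exI conjI)
  define c where "c i = (if i = i0 then - (\<Sum>j\<in>I - {i0}. c' j * e j) else c' i * a0)" for i
  show "\<forall>i\<in>I. c i \<in> K"
    using c' e a0 unfolding c_def by (auto intro!: K_uminus K_mult sum_in_subring)
  show "\<exists>i\<in>I. c i \<noteq> 0"
    using c' a0 unfolding c_def by auto
  have "(\<Sum>i\<in>I. c i * v i) = c i0 * v i0 + (\<Sum>i\<in>I - {i0}. c' i * a0 * v i)"
    using I by (simp add: sum.remove c_def)
  also have "\<dots> = (\<Sum>i\<in>I - {i0}. c' i * (a0 * v i - e i * v i0))"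
    unfolding c_def by (simp add: algebra_simps sum_distrib_left sum_subtractf)
  finally show "(\<Sum>i\<in>I. c i * v i) = 0"
    using rel by simp
qed

text \<open>Steinitz exchange: eliminate one spanning vector \<open>b\<close> by replacing every
  \<open>v i\<close> with \<open>a\<^sub>0 v i - c\<^sub>i v i\<^sub>0\<close>, where \<open>c\<^sub>i\<close> is the \<open>b\<close>-coordinate of \<open>v i\<close>.\<close>
lemma span_over_dependent:
  assumes "finite B" "finite I" "card B < card I" "v ` I \<subseteq> span_over K B"
  shows "\<exists>c. (\<forall>i\<in>I. c i \<in> K) \<and> (\<exists>i\<in>I. c i \<noteq> 0) \<and> (\<Sum>i\<in>I. c i * v i) = 0"
  using assms
proof (induction B arbitrary: I v rule: finite_induct)
  case empty
  then obtain i where i: "i \<in> I"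
    by fastforce
  have "\<forall>j\<in>I. v j = 0"
    using empty(3) by (auto simp: span_over_def)
  then show ?case
    using i K_0 K_1 by (intro exI[of _ "\<lambda>j. if j = i then 1 else 0"]) auto
next
  case (insert b B I v)
  have "\<forall>i\<in>I. \<exists>c. (\<forall>b'\<in>insert b B. c b' \<in> K) \<and> v i = (\<Sum>b'\<in>insert b B. c b' * b')"
    using insert.prems(3) unfolding span_over_def by blast
  then obtain cf where "\<forall>i\<in>I. (\<forall>b'\<in>insert b B. cf i b' \<in> K) \<and> v i = (\<Sum>b'\<in>insert b B. cf i b' * b')"
    by (rule bchoice[elim_format]) blast
  then have cf_K: "\<And>i b'. i \<in> I \<Longrightarrow> b' \<in> insert b B \<Longrightarrow> cf i b' \<in> K"
    and v_split: "\<And>i. i \<in> I \<Longrightarrow> v i = cf i b * b + (\<Sum>b'\<in>B. cf i b' * b')"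
    using insert.hyps by auto
  show ?case
  proof (cases "\<forall>i\<in>I. cf i b = 0")
    case True
    have "v ` I \<subseteq> span_over K B"
    proof (intro image_subsetI)
      fix i
      assume "i \<in> I"
      then show "v i \<in> span_over K B"
        unfolding span_over_def using True v_split cf_K by (intro CollectI exI[of _ "cf i"]) auto
    qed
    then show ?thesis
      using insert by simp
  next
    case False
    then obtain i0 where i0: "i0 \<in> I" "cf i0 b \<noteq> 0"
      by blast
    define v' where "v' i = cf i0 b * v i - cf i b * v i0" for i
    have "card B < card (I - {i0})"
      using insert.prems(1,2) insert.hyps i0 by simp
    moreover have "v' ` (I - {i0}) \<subseteq> span_over K B"
    proof (intro image_subsetI)
      fix i
      assume "i \<in> I - {i0}"
      then have i: "i \<in> I"
        by simp
      define d where "d b' = cf i0 b * cf i b' - cf i b * cf i0 b'" for b'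
      have "v' i = (\<Sum>b'\<in>B. d b' * b')"
        unfolding v'_def v_split[OF i] v_split[OF i0(1)] d_def
        by (simp add: algebra_simps sum_distrib_left sum_subtractf flip: sum.distrib)
      moreover have "\<forall>b'\<in>B. d b' \<in> K"
        using i i0(1) unfolding d_def by (auto intro!: diff_in_subring K_mult cf_K)
      ultimately show "v' i \<in> span_over K B"
        unfolding span_over_def by blast
    qed
    ultimately obtain c' where c'_K: "\<forall>i\<in>I - {i0}. c' i \<in> K"
      and c'_nz: "\<exists>i\<in>I - {i0}. c' i \<noteq> 0" and c'_rel: "(\<Sum>i\<in>I - {i0}. c' i * v' i) = 0"
      using insert.IH[of "I - {i0}" v'] insert.prems(1) by auto
    have "\<forall>i\<in>I. cf i b \<in> K"
      using cf_K by simp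
    from dependent_if_eliminated_dependent[OF insert.prems(1) i0(1) cf_K[OF i0(1)] i0(2) this c'_K c'_nz]
    show ?thesis
      using c'_rel unfolding v'_def by blast
  qed
qed

end

definition digit_lists :: "nat \<Rightarrow> nat \<Rightarrow> nat list set" where
  "digit_lists l k = {ns. length ns = k \<and> set ns \<subseteq> {..<l}}"

definition digit_comb :: "(nat \<Rightarrow> 'a::semiring_1) \<Rightarrow> nat list \<Rightarrow> 'a" where
  "digit_comb Y ns = (\<Sum>j<length ns. of_nat (ns ! j) * Y j)"

lemma finite_digit_lists: "finite (digit_lists l k)"
  using finite_lists_length_eq[of "{..<l}" k] unfolding digit_lists_def by (simp add: conj_commute)

lemma digit_lists_SucE:
  assumes "ns \<in> digit_lists l (Suc k)"
  obtains xs a where "ns = xs @ [a]" "xs \<in> digit_lists l k" "a < l"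
  using assms unfolding digit_lists_def by (cases ns rule: rev_cases) auto

lemma digit_comb_snoc:
  "length xs = k \<Longrightarrow> digit_comb (Y(k := z)) (xs @ [a]) = digit_comb Y xs + of_nat a * z"
  unfolding digit_comb_def by (simp add: nth_append)

lemma digit_comb_replicate_0: "digit_comb Y (replicate k 0) = 0"
  unfolding digit_comb_def by simp

context padic_absval
begin

definition mod_digits :: "(nat \<Rightarrow> int) \<Rightarrow> nat \<Rightarrow> nat list" where
  "mod_digits w k = map (\<lambda>j. nat (w j mod int l)) [0..<k]"

lemma mod_digits_in_digit_lists: "mod_digits w k \<in> digit_lists l k"
  using prime_gt_0_nat[OF prime_l] unfolding mod_digits_def digit_lists_def by (auto simp: nat_less_iff)

lemma int_comb_near_mod_digits:
  assumes "\<And>j. j < k \<Longrightarrow> f (Y j) \<le> 1"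
  shows "f ((\<Sum>j<k. of_int (w j) * Y j) - digit_comb Y (mod_digits w k)) < 1"
proof -
  have "(\<Sum>j<k. of_int (w j) * Y j) - digit_comb Y (mod_digits w k)
      = (\<Sum>j<k. of_int (w j - w j mod int l) * Y j)"
    using prime_gt_0_nat[OF prime_l] unfolding digit_comb_def mod_digits_def
    by (simp add: sum_subtractf[symmetric] algebra_simps)
  also have "f \<dots> < 1"
    using assms by (intro sum_less of_int_mult_less_1) (auto simp: minus_mod_eq_mult_div)
  finally show ?thesis .
qed

lemma near_int_comb_imp_near_digit_comb:
  assumes "\<And>j. j < k \<Longrightarrow> f (Y j) \<le> 1" and "f (z - (\<Sum>j<k. of_int (w j) * Y j)) < 1"
  shows "\<exists>ns\<in>digit_lists l k. f (z - digit_comb Y ns) < 1"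
proof
  have "f ((\<Sum>j<k. of_int (w j) * Y j) - digit_comb Y (mod_digits w k)) < 1"
    using int_comb_near_mod_digits assms(1) by blast
  then show "f (z - digit_comb Y (mod_digits w k)) < 1"
    using assms(2) diff_less_cong by blast
qed (rule mod_digits_in_digit_lists)

text \<open>The residues of \<open>Y 0, \<dots>, Y (k - 1)\<close> are linearly independent over \<open>\<int>/l\<close>.\<close>
definition resid_independent :: "(nat \<Rightarrow> 'a) \<Rightarrow> nat \<Rightarrow> bool" where
  "resid_independent Y k \<longleftrightarrow> (\<forall>j<k. f (Y j) \<le> 1) \<and>
     (\<forall>ns\<in>digit_lists l k. \<forall>ns'\<in>digit_lists l k. f (digit_comb Y ns - digit_comb Y ns') < 1 \<longrightarrow> ns = ns')"

lemma resid_independent_0: "resid_independent Y 0"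
  unfolding resid_independent_def digit_lists_def by auto

text \<open>If \<open>l \<nmid> e\<close>, then \<open>e\<close> is invertible modulo \<open>l\<close>, so a small value of \<open>D + e z\<close> would put
  \<open>z\<close> close to \<open>-e\<^sup>-\<^sup>1 D\<close>, an integer combination of the \<open>Y j\<close>.\<close>
lemma far_from_digit_combs_scaled:
  assumes Y_le: "\<And>j. j < k \<Longrightarrow> f (Y j) \<le> 1" and z: "f z \<le> 1"
    and far: "\<forall>ns\<in>digit_lists l k. \<not> f (z - digit_comb Y ns) < 1"
    and e: "\<not> int l dvd e"
  shows "\<not> f ((\<Sum>j<k. of_int (w j) * Y j) + of_int e * z) < 1"
proof
  define D where "D = (\<Sum>j<k. of_int (w j) * Y j)"
  assume small: "f ((\<Sum>j<k. of_int (w j) * Y j) + of_int e * z) < 1"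
  obtain u v where uv: "u * e + v * int l = 1"
    using e by (rule bezout_prime_l)
  have "of_int u * (D + of_int e * z) + of_int (v * int l) * z
      = of_int u * D + of_int (u * e + v * int l) * z"
    by (simp add: algebra_simps)
  also have "of_int u * D = - (\<Sum>j<k. of_int (- u * w j) * Y j)"
    unfolding D_def by (simp add: sum_distrib_left sum_negf algebra_simps)
  finally have z_eq: "z - (\<Sum>j<k. of_int (- u * w j) * Y j)
      = of_int u * (D + of_int e * z) + of_int (v * int l) * z"
    unfolding uv by simp
  have "f (of_int u * (D + of_int e * z)) < 1"
    using small mult_left_le_one_le[of "f (D + of_int e * z)" "f (of_int u)"] of_int_le_1[of u]
    unfolding D_def by simp
  moreover have "f (of_int (v * int l) * z) < 1"
    using z by (intro of_int_mult_less_1) auto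
  ultimately have "f (z - (\<Sum>j<k. of_int (- u * w j) * Y j)) < 1"
    unfolding z_eq using ultrametric[of "of_int u * (D + of_int e * z)" "of_int (v * int l) * z"]
    by simp
  then show False
    using near_int_comb_imp_near_digit_comb[of k Y z "\<lambda>j. - u * w j"] Y_le far by blast
qed

lemma resid_independent_extend:
  assumes indep: "resid_independent Y k" and z: "f z \<le> 1"
    and far: "\<forall>ns\<in>digit_lists l k. \<not> f (z - digit_comb Y ns) < 1"
  shows "resid_independent (Y(k := z)) (Suc k)"
proof -
  have Y_le: "\<And>j. j < k \<Longrightarrow> f (Y j) \<le> 1"
    and Y_indep: "\<And>ns ns'. ns \<in> digit_lists l k \<Longrightarrow> ns' \<in> digit_lists l k \<Longrightarrow>
      f (digit_comb Y ns - digit_comb Y ns') < 1 \<Longrightarrow> ns = ns'"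
    using indep unfolding resid_independent_def by auto
  have "ns = ns'"
    if ns: "ns \<in> digit_lists l (Suc k)" and ns': "ns' \<in> digit_lists l (Suc k)"
      and close: "f (digit_comb (Y(k := z)) ns - digit_comb (Y(k := z)) ns') < 1" for ns ns'
  proof -
    obtain xs a where ns_eq: "ns = xs @ [a]" and xs: "xs \<in> digit_lists l k" and a: "a < l"
      using ns by (rule digit_lists_SucE)
    obtain xs' a' where ns'_eq: "ns' = xs' @ [a']" and xs': "xs' \<in> digit_lists l k" and a': "a' < l"
      using ns' by (rule digit_lists_SucE)
    have len: "length xs = k" "length xs' = k"
      using xs xs' unfolding digit_lists_def by auto
    have D_eq: "digit_comb Y xs - digit_comb Y xs' = (\<Sum>j<k. of_int (int (xs ! j) - int (xs' ! j)) * Y j)"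
      unfolding digit_comb_def len by (simp add: sum_subtractf[symmetric] algebra_simps)
    have small: "f ((digit_comb Y xs - digit_comb Y xs') + of_int (int a - int a') * z) < 1"
      using close unfolding ns_eq ns'_eq digit_comb_snoc[OF len(1)] digit_comb_snoc[OF len(2)]
      by (simp add: algebra_simps)
    have "a = a'"
    proof (rule ccontr)
      assume "a \<noteq> a'"
      then have "\<not> int l dvd (int a - int a')"
        using a a' dvd_imp_le_int[of "int a - int a'" "int l"] by auto
      then show False
        using far_from_digit_combs_scaled[where w = "\<lambda>j. int (xs ! j) - int (xs' ! j)"] Y_le z far small
        unfolding D_eq by blast
    qed
    then have "f (digit_comb Y xs - digit_comb Y xs') < 1"
      using small by simp
    then show "ns = ns'"
      using Y_indep[OF xs xs'] ns_eq ns'_eq \<open>a = a'\<close> by simp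
  qed
  moreover have "\<forall>j<Suc k. f ((Y(k := z)) j) \<le> 1"
    using Y_le z by (auto simp: less_Suc_eq)
  ultimately show ?thesis
    unfolding resid_independent_def by blast
qed

lemma Ql_normalize:
  assumes "finite I" "\<forall>i\<in>I. c i \<in> Ql" "\<exists>i\<in>I. c i \<noteq> 0"
  obtains q where "q \<noteq> 0" "\<forall>i\<in>I. f (c i / of_rat q) \<le> 1" "\<exists>i\<in>I. f (c i / of_rat q) = 1"
proof -
  have "Max ((\<lambda>i. f (c i)) ` I) \<in> (\<lambda>i. f (c i)) ` I"
    using assms(1,3) by (intro Max_in) auto
  then obtain i0 where i0: "i0 \<in> I" and i0_max: "f (c i0) = Max ((\<lambda>i. f (c i)) ` I)"
    by (metis imageE)
  have max: "\<And>i. i \<in> I \<Longrightarrow> f (c i) \<le> f (c i0)"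
    unfolding i0_max using assms(1) by simp
  obtain i1 where "i1 \<in> I" "c i1 \<noteq> 0"
    using assms(3) by blast
  then have pos: "0 < f (c i0)"
    using max[of i1] pos_iff[of "c i1"] by linarith
  then obtain q where q: "f (c i0 - of_rat q) < f (c i0)"
    using assms(2) i0 unfolding closure_of_rat_def by blast
  have fq: "f (of_rat q) = f (c i0)"
    using add_eq_dominant[of "of_rat q - c i0" "c i0"] q minus_commute by simp
  show ?thesis
  proof (rule that)
    show "q \<noteq> 0"
      using fq pos by auto
    show "\<forall>i\<in>I. f (c i / of_rat q) \<le> 1"
      using fq pos max by (simp add: divide_le_eq_1)
    show "\<exists>i\<in>I. f (c i / of_rat q) = 1"
      using fq pos i0 by (intro bexI[of _ i0]) simp_all
  qed
qed

lemma resid_independent_small_int_comb: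
  assumes indep: "resid_independent Y k" and small: "f (\<Sum>j<k. of_int (n j) * Y j) < 1"
    and "j < k"
  shows "int l dvd n j"
proof -
  have "f ((\<Sum>j<k. of_int (n j) * Y j) - digit_comb Y (mod_digits n k)) < 1"
    using int_comb_near_mod_digits indep unfolding resid_independent_def by blast
  then have "f (digit_comb Y (replicate k 0) - digit_comb Y (mod_digits n k)) < 1"
    using diff_less_cong[of _ _ 1 0] small unfolding digit_comb_replicate_0 by simp
  moreover have "replicate k 0 \<in> digit_lists l k"
    using prime_gt_0_nat[OF prime_l] by (auto simp: digit_lists_def)
  ultimately have "replicate k 0 = mod_digits n k"
    using indep mod_digits_in_digit_lists unfolding resid_independent_def by blast
  then have "replicate k 0 ! j = mod_digits n k ! j"
    by simp
  then have "nat (n j mod int l) = 0"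
    using \<open>j < k\<close> by (simp add: mod_digits_def)
  moreover have "0 \<le> n j mod int l"
    using prime_gt_0_nat[OF prime_l] by simp
  ultimately show "int l dvd n j"
    by (simp add: dvd_eq_mod_eq_0)
qed

text \<open>Approximate the coefficients by integers; independence forces these to be divisible by \<open>l\<close>.\<close>
lemma resid_independent_relation:
  assumes indep: "resid_independent Y k"
    and d: "\<And>j. j < k \<Longrightarrow> d j \<in> Ql \<and> f (d j) \<le> 1"
    and rel: "(\<Sum>j<k. d j * Y j) = 0"
    and "j < k"
  shows "f (d j) < 1"
proof -
  have "\<forall>j. \<exists>n. j < k \<longrightarrow> f (d j - of_int n) < 1"
    using Ql_near_integer d by blast
  then obtain n where n: "\<And>j. j < k \<Longrightarrow> f (d j - of_int (n j)) < 1"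
    using choice[of "\<lambda>j n. j < k \<longrightarrow> f (d j - of_int n) < 1"] by blast
  have "(\<Sum>j<k. of_int (n j) * Y j) = (\<Sum>j<k. (of_int (n j) - d j) * Y j)"
    using rel by (simp add: sum_subtractf left_diff_distrib)
  also have "f \<dots> < 1"
    using n indep unfolding resid_independent_def
    by (intro sum_less) (auto intro: le_less_trans[OF mult_right_le_one_le] simp: minus_commute)
  finally have "int l dvd n j"
    using resid_independent_small_int_comb[OF indep _ \<open>j < k\<close>] by blast
  then have "f (of_int (n j)) < 1"
    by (simp add: of_int_less_1_iff)
  then show ?thesis
    using ultrametric[of "d j - of_int (n j)" "of_int (n j)"] n[OF \<open>j < k\<close>] by simp
qed

lemma resid_independent_le_card:
  assumes B: "finite B" "span_over Ql B = UNIV" and indep: "resid_independent Y k"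
  shows "k \<le> card B"
proof (rule ccontr)
  assume "\<not> k \<le> card B"
  then obtain c where c_Ql: "\<forall>j\<in>{..<k}. c j \<in> Ql" and c_nz: "\<exists>j\<in>{..<k}. c j \<noteq> 0"
    and rel: "(\<Sum>j<k. c j * Y j) = 0"
    using span_over_dependent[OF Ql_0 Ql_1 Ql_add Ql_mult Ql_uminus B(1), of "{..<k}" Y] B(2) by auto
  obtain q where q: "q \<noteq> 0" and le_1: "\<forall>j\<in>{..<k}. f (c j / of_rat q) \<le> 1"
    and eq_1: "\<exists>j\<in>{..<k}. f (c j / of_rat q) = 1"
    using Ql_normalize[OF _ c_Ql c_nz] by blast
  have d_ok: "\<And>j. j < k \<Longrightarrow> c j / of_rat q \<in> Ql \<and> f (c j / of_rat q) \<le> 1"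
    using Ql_divide_of_rat q c_Ql le_1 by blast
  have "(\<Sum>j<k. c j / of_rat q * Y j) = 0"
    using rel by (simp add: sum_divide_distrib[symmetric])
  then have "f (c j / of_rat q) < 1" if "j < k" for j
    using resid_independent_relation[where d = "\<lambda>j. c j / of_rat q"] indep d_ok that by blast
  moreover obtain j where "j < k" "f (c j / of_rat q) = 1"
    using eq_1 by blast
  ultimately show False
    by (metis less_irrefl)
qed

lemma unit_ball_finite_net:
  assumes "finite_dim_over Ql"
  shows "\<exists>S. finite S \<and> (\<forall>x. f x \<le> 1 \<longrightarrow> (\<exists>s\<in>S. f (x - s) < 1))"
proof (rule ccontr)
  assume no_net: "\<not> ?thesis"
  obtain B where B: "finite B" "span_over Ql B = UNIV"
    using assms unfolding finite_dim_over_iff by blast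
  have "\<exists>Y. resid_independent Y k" for k
  proof (induction k)
    case 0
    show ?case
      using resid_independent_0 by blast
  next
    case (Suc k)
    then obtain Y where "resid_independent Y k"
      by blast
    moreover obtain z where "f z \<le> 1" "\<forall>ns\<in>digit_lists l k. \<not> f (z - digit_comb Y ns) < 1"
      using no_net finite_digit_lists[of l k] by (metis finite_imageI imageI)
    ultimately show ?case
      using resid_independent_extend by blast
  qed
  then show False
    using resid_independent_le_card[OF B] by (meson Suc_n_not_le_n)
qed

end

section \<open>The fixed field and the Cayley transform\<close>

locale order2_aut =
  fixes t :: "'a::field \<Rightarrow> 'a"
  assumes field_aut_order2: "field_aut_order2 t"
begin

lemma t_add [simp]: "t (x + y) = t x + t y"
  and t_mult [simp]: "t (x * y) = t x * t y"
  and t_1 [simp]: "t 1 = 1"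
  using field_aut_order2 unfolding field_aut_order2_def by auto

lemma t_t [simp]: "t (t x) = x"
  using field_aut_order2 unfolding field_aut_order2_def by (metis comp_apply id_apply)

lemma t_0 [simp]: "t 0 = 0"
  using t_add[of 0 0] by (metis add_cancel_right_right)

lemma t_uminus [simp]: "t (- x) = - t x"
  using t_add[of x "- x"] by (metis neg_eq_iff_add_eq_0 t_0)

lemma t_diff [simp]: "t (x - y) = t x - t y"
  using t_add[of x "- y"] by simp

lemma t_inverse [simp]: "t (inverse x) = inverse (t x)"
proof (cases "x = 0")
  case False
  then have "t x * t (inverse x) = 1"
    by (simp flip: t_mult)
  then show ?thesis
    using inverse_unique by metis
qed simp

lemma t_divide [simp]: "t (x / y) = t x / t y"
  by (simp add: divide_inverse)

lemma t_power [simp]: "t (x ^ n) = t x ^ n"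
  by (induction n) auto

lemma t_of_nat [simp]: "t (of_nat n) = of_nat n"
  by (induction n) auto

lemma exists_not_fixed: "\<exists>z. t z \<noteq> z"
  using field_aut_order2 unfolding field_aut_order2_def by (metis eq_id_iff)

end

locale fixed_field_uniformizer = padic_absval f l + order2_aut t
  for f :: "'a::field_char_0 \<Rightarrow> real" and l t +
  fixes lam :: 'a
  assumes uniformizer: "is_uniformizer f t lam"
begin

abbreviation Ofix :: "'a set" where
  "Ofix \<equiv> int_ring_fixed f t"

lemma mem_Ofix_iff: "x \<in> Ofix \<longleftrightarrow> t x = x \<and> f x \<le> 1"
  unfolding int_ring_fixed_def fixed_field_def by simp

lemma lam_in_Ofix: "lam \<in> Ofix"
  using uniformizer unfolding is_uniformizer_def by simp

lemma less_1_iff_lam_dvd: "y \<in> Ofix \<Longrightarrow> f y < 1 \<longleftrightarrow> (\<exists>z\<in>Ofix. y = lam * z)"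
  using uniformizer unfolding is_uniformizer_def by blast

lemma Ofix_diff: "x \<in> Ofix \<Longrightarrow> y \<in> Ofix \<Longrightarrow> x - y \<in> Ofix"
  unfolding mem_Ofix_iff using ultrametric_diff[of x y] by auto

lemma lam_less_1: "f lam < 1"
  using less_1_iff_lam_dvd[OF lam_in_Ofix] mem_Ofix_iff by fastforce

lemma le_lam_if_less_1:
  assumes "b \<in> Ofix" "f b < 1"
  shows "f b \<le> f lam"
proof -
  obtain z where "z \<in> Ofix" "b = lam * z"
    using assms less_1_iff_lam_dvd by blast
  then show ?thesis
    using mult_left_le[of "f z" "f lam"] by (simp add: mem_Ofix_iff)
qed

lemma lam_nonzero: "lam \<noteq> 0"
proof
  assume "lam = 0"
  have "of_nat l \<in> Ofix" "f (of_nat l) < 1"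
    using of_int_le_1[of "int l"] of_int_less_1_iff[of "int l"] by (simp_all add: mem_Ofix_iff)
  then obtain z where "of_nat l = lam * z"
    using less_1_iff_lam_dvd by blast
  then show False
    using \<open>lam = 0\<close> prime_gt_0_nat[OF prime_l] by simp
qed

lemma lam_pos: "0 < f lam"
  using lam_nonzero by simp

end

lemma exists_power_between:
  fixes \<rho> a r :: real
  assumes "0 < \<rho>" "\<rho> < 1" "0 < r" "r < a"
  shows "\<exists>N. \<rho> * r < a * \<rho> ^ N \<and> a * \<rho> ^ N \<le> r"
proof -
  have ex: "\<exists>N. a * \<rho> ^ N \<le> r"
  proof -
    obtain N where "\<rho> ^ N < r / a"
      using real_arch_pow_inv[of "r / a" \<rho>] assms by auto
    then show ?thesis
      using assms by (auto simp: field_simps intro!: exI[of _ N])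
  qed
  define N where "N = (LEAST N. a * \<rho> ^ N \<le> r)"
  have le: "a * \<rho> ^ N \<le> r"
    unfolding N_def by (rule LeastI_ex[OF ex])
  then obtain M where M: "N = Suc M"
    using assms by (cases N) auto
  then have "r < a * \<rho> ^ M"
    using not_less_Least[of M "\<lambda>N. a * \<rho> ^ N \<le> r"] unfolding N_def by auto
  then have "\<rho> * r < a * \<rho> ^ N"
    using assms(1) unfolding M by simp
  then show ?thesis
    using le by blast
qed

context fixed_field_uniformizer
begin

lemma exists_skew_element:
  assumes "0 < r"
  shows "\<exists>w. t w = - w \<and> w \<noteq> 0 \<and> f lam * r < f w \<and> f w \<le> r"
proof -
  obtain z where "t z \<noteq> z"
    using exists_not_fixed by blast
  define \<delta> where "\<delta> = z - t z"
  have \<delta>: "t \<delta> = - \<delta>" "\<delta> \<noteq> 0"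
    using \<open>t z \<noteq> z\<close> unfolding \<delta>_def by auto
  obtain M where M: "f lam ^ M < f \<delta> / r"
    using real_arch_pow_inv[of "f \<delta> / r" "f lam"] \<delta>(2) assms lam_less_1 by auto
  define \<delta>' where "\<delta>' = \<delta> / lam ^ M"
  have t_lam: "t lam = lam"
    using lam_in_Ofix mem_Ofix_iff by blast
  have "r < f \<delta>'"
    using M lam_pos assms unfolding \<delta>'_def by (simp add: field_simps)
  then obtain N where N: "f lam * r < f \<delta>' * f lam ^ N" "f \<delta>' * f lam ^ N \<le> r"
    using exists_power_between[OF lam_pos lam_less_1 assms] by blast
  show ?thesis
  proof (intro exI conjI)
    show "t (\<delta>' * lam ^ N) = - (\<delta>' * lam ^ N)"
      using \<delta>(1) t_lam unfolding \<delta>'_def by simp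
    show "\<delta>' * lam ^ N \<noteq> 0"
      using \<delta>(2) lam_nonzero unfolding \<delta>'_def by simp
  qed (use N in simp_all)
qed

text \<open>This and the next lemma rest on \<open>le_lam_if_less_1\<close>: no fixed element has absolute value
  strictly between \<open>f lam\<close> and \<open>1\<close>.\<close>
lemma scaled_le_iff:
  assumes w: "f lam * r < f w" "f w \<le> r" and b: "t b = b"
  shows "f (w * b) \<le> r \<longleftrightarrow> f b \<le> 1"
proof
  assume "f b \<le> 1"
  then show "f (w * b) \<le> r"
    using w mult_right_le_one_le[of "f w" "f b"] by simp
next
  assume wb: "f (w * b) \<le> r"
  show "f b \<le> 1"
  proof (rule ccontr)
    assume "\<not> f b \<le> 1"
    then have "inverse b \<in> Ofix" "f (inverse b) < 1"
      using b by (simp_all add: mem_Ofix_iff inverse_le_1_iff inverse_less_1_iff)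
    then have "inverse (f b) \<le> f lam"
      using le_lam_if_less_1 by fastforce
    moreover have "0 < f b"
      using \<open>\<not> f b \<le> 1\<close> by (cases "b = 0") simp_all
    ultimately have "1 \<le> f lam * f b"
      by (simp add: inverse_eq_divide divide_le_eq mult.commute)
    then have "f w * 1 \<le> f w * (f lam * f b)"
      by (intro mult_left_mono) auto
    then have "f w \<le> f lam * (f w * f b)"
      by (simp add: ac_simps)
    also have "\<dots> \<le> f lam * r"
      using wb lam_pos by simp
    finally show False
      using w by simp
  qed
qed

lemma scaled_le_lam_iff:
  assumes w: "f lam * r < f w" "f w \<le> r" and b: "t b = b" and "0 < r"
  shows "f (w * b) \<le> f lam * r \<longleftrightarrow> f b < 1"
proof
  assume "f b < 1"
  then have "f b \<le> f lam"
    using b le_lam_if_less_1 by (simp add: mem_Ofix_iff)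
  then have "f w * f b \<le> r * f lam"
    using w order_trans[OF nonneg w(2)] by (intro mult_mono) auto
  then show "f (w * b) \<le> f lam * r"
    by (simp add: mult.commute)
next
  assume "f (w * b) \<le> f lam * r"
  then have "f w * f b < f w * 1"
    using w by simp
  moreover have "0 < f w"
    using w(1) lam_pos \<open>0 < r\<close> by (meson less_trans mult_pos_pos)
  ultimately show "f b < 1"
    by simp
qed

lemma residue_class_eq:
  assumes "b \<in> Ofix"
  shows "{y \<in> Ofix. \<exists>z\<in>Ofix. y - b = lam * z} = {y \<in> Ofix. f (y - b) < 1}"
  using less_1_iff_lam_dvd[OF Ofix_diff[OF _ assms]] by auto

lemma finite_residue_classes:
  assumes "finite_dim_over Ql"
  shows "finite (residue_classes f t lam)"
proof -
  obtain S where S: "finite S" "\<And>x. f x \<le> 1 \<Longrightarrow> \<exists>s\<in>S. f (x - s) < 1"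
    using unit_ball_finite_net[OF assms] by blast
  have "residue_classes f t lam \<subseteq> (\<lambda>s. {y \<in> Ofix. f (y - s) < 1}) ` S"
  proof
    fix X
    assume "X \<in> residue_classes f t lam"
    then obtain b where b: "b \<in> Ofix" "X = {y \<in> Ofix. f (y - b) < 1}"
      unfolding residue_classes_def using residue_class_eq by blast
    then obtain s where "s \<in> S" "f (b - s) < 1"
      using S(2) mem_Ofix_iff by blast
    then show "X \<in> (\<lambda>s. {y \<in> Ofix. f (y - s) < 1}) ` S"
      using b diff_less_cong[of b s 1] by auto
  qed
  then show ?thesis
    using S(1) finite_subset by blast
qed

lemma Cgrp_nonzero: "x \<in> Cgrp f t \<Longrightarrow> x \<noteq> 0"
  unfolding Cgrp_def by auto

lemma Cgrp_t: "x \<in> Cgrp f t \<Longrightarrow> t x = inverse x"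
  using inverse_unique[of x "t x"] unfolding Cgrp_def by simp

lemma Cgrp_divide: "x \<in> Cgrp f t \<Longrightarrow> y \<in> Cgrp f t \<Longrightarrow> y / x \<in> Cgrp f t"
  unfolding Cgrp_def by (simp add: field_simps)

lemma Cfilt_coset_eq:
  assumes x: "x \<in> Cgrp f t"
  shows "(\<lambda>c. x * c) ` Cfilt f t lam m = {y \<in> Cgrp f t. f (y - x) \<le> f lam ^ m}"
proof -
  have x_unit: "f x = 1" "x * t x = 1" "x \<noteq> 0"
    using x unfolding Cgrp_def by auto
  have dist_eq: "f (y / x - 1) = f (y - x)" for y
  proof -
    have "y / x - 1 = (y - x) / x"
      using x_unit(3) by (simp add: field_simps)
    then show ?thesis
      using x_unit(1) by simp
  qed
  show ?thesis
  proof (intro set_eqI iffI)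
    fix y
    assume "y \<in> (\<lambda>c. x * c) ` Cfilt f t lam m"
    then obtain c where c: "c \<in> Cfilt f t lam m" "y = x * c"
      by blast
    then have "y \<in> Cgrp f t"
      using x_unit c unfolding Cfilt_def Cgrp_def by (auto simp: algebra_simps)
    moreover have "y / x = c"
      using c(2) x_unit(3) by simp
    ultimately show "y \<in> {y \<in> Cgrp f t. f (y - x) \<le> f lam ^ m}"
      using c(1) dist_eq[of y] unfolding Cfilt_def by simp
  next
    fix y
    assume y: "y \<in> {y \<in> Cgrp f t. f (y - x) \<le> f lam ^ m}"
    then have "y / x \<in> Cfilt f t lam m"
      using Cgrp_divide[OF x] dist_eq[of y] unfolding Cfilt_def by simp
    moreover have "y = x * (y / x)"
      using x_unit(3) by simp
    ultimately show "y \<in> (\<lambda>c. x * c) ` Cfilt f t lam m"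
      by blast
  qed
qed

end

lemma bij_betw_image_classes:
  assumes h: "bij_betw h A B"
    and classes: "\<And>a a'. a \<in> A \<Longrightarrow> a' \<in> A \<Longrightarrow> E1 a = E1 a' \<longleftrightarrow> E2 (h a) = E2 (h a')"
  shows "\<exists>g. bij_betw g (E1 ` A) (E2 ` B)"
proof
  define rep where "rep X = (SOME a. a \<in> A \<and> E1 a = X)" for X
  have rep: "rep (E1 a) \<in> A \<and> E1 (rep (E1 a)) = E1 a" if "a \<in> A" for a
    unfolding rep_def by (rule someI[where x = a]) (simp add: that)
  show "bij_betw (\<lambda>X. E2 (h (rep X))) (E1 ` A) (E2 ` B)"
  proof (rule bij_betw_imageI)
    show "inj_on (\<lambda>X. E2 (h (rep X))) (E1 ` A)"
    proof (rule inj_onI)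
      fix X X'
      assume "X \<in> E1 ` A" "X' \<in> E1 ` A" and eq: "E2 (h (rep X)) = E2 (h (rep X'))"
      then obtain a a' where a: "a \<in> A" "X = E1 a" and a': "a' \<in> A" "X' = E1 a'"
        by blast
      then show "X = X'"
        using rep[OF a(1)] rep[OF a'(1)] classes[of "rep X" "rep X'"] eq by simp
    qed
    have "E2 (h (rep (E1 a))) = E2 (h a)" if "a \<in> A" for a
      using rep[OF that] classes[OF _ that] by blast
    then have "(\<lambda>X. E2 (h (rep X))) ` E1 ` A = E2 ` h ` A"
      unfolding image_image by (rule image_cong[OF refl])
    then show "(\<lambda>X. E2 (h (rep X))) ` E1 ` A = E2 ` B"
      using h by (simp add: bij_betw_def)
  qed
qed

text \<open>The Cayley transform \<open>x \<mapsto> (x - 1) / (x + 1)\<close> turns the norm-one condition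
  \<open>x \<cdot> t x = 1\<close> into \<open>t y = - y\<close>; dividing by a fixed skew element \<open>w\<close> then makes the
  result fixed by \<open>t\<close>.\<close>
definition cayley :: "'a::field \<Rightarrow> 'a \<Rightarrow> 'a" where
  "cayley w b = (1 + w * b) / (1 - w * b)"

definition cayley_inv :: "'a::field \<Rightarrow> 'a \<Rightarrow> 'a" where
  "cayley_inv w x = (x - 1) / ((x + 1) * w)"

lemma cayley_inv_cayley:
  fixes w b :: "'a::field_char_0"
  assumes "w \<noteq> 0" "1 + w * b \<noteq> 0" "1 - w * b \<noteq> 0"
  shows "cayley_inv w (cayley w b) = b"
proof -
  have eqs: "cayley w b - 1 = 2 * w * b / (1 - w * b)" "cayley w b + 1 = 2 / (1 - w * b)"
    using assms(3) unfolding cayley_def by (simp_all add: field_simps)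
  show ?thesis
    unfolding cayley_inv_def eqs using assms by (simp add: field_simps)
qed

lemma mult_cayley_inv: "w \<noteq> 0 \<Longrightarrow> w * cayley_inv w x = (x - 1) / (x + 1)"
  unfolding cayley_inv_def by simp

lemma cayley_cayley_inv:
  fixes w x :: "'a::field_char_0"
  assumes "w \<noteq> 0" "x + 1 \<noteq> 0"
  shows "cayley w (cayley_inv w x) = x"
proof -
  have "w * cayley_inv w x = (x - 1) / (x + 1)"
    using assms(1) by (rule mult_cayley_inv)
  moreover have "1 + (x - 1) / (x + 1) = 2 * x / (x + 1)" "1 - (x - 1) / (x + 1) = 2 / (x + 1)"
    using assms(2) by (simp_all add: field_simps)
  ultimately show ?thesis
    using assms(2) unfolding cayley_def by simp
qed

lemma cayley_minus_1: "1 - w * b \<noteq> 0 \<Longrightarrow> cayley w b - 1 = 2 * (w * b) / (1 - w * b)"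
  unfolding cayley_def by (simp add: field_simps)

lemma cayley_inv_inverse:
  assumes "x \<noteq> 0" "x + 1 \<noteq> 0"
  shows "cayley_inv (- w) (inverse x) = cayley_inv w x"
proof -
  have "inverse x - 1 = (1 - x) / x" "inverse x + 1 = (x + 1) / x"
    using assms(1) by (simp_all add: field_simps)
  then show ?thesis
    using assms unfolding cayley_inv_def by simp (metis minus_diff_eq minus_divide_left)
qed

lemma cayley_inv_diff:
  assumes "w \<noteq> 0" "x + 1 \<noteq> 0" "x' + 1 \<noteq> 0"
  shows "w * (cayley_inv w x - cayley_inv w x') = 2 * (x - x') / ((x + 1) * (x' + 1))"
  using assms by (simp add: right_diff_distrib mult_cayley_inv field_simps)

context fixed_field_uniformizer
begin

text \<open>\<open>|x + 1| = |2|\<close> on \<open>C(n)\<close>, and \<open>w\<close> is normalised so that \<open>|w b| \<le> |\<lambda>|\<^sup>n / |2|\<close> holds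
  exactly for integral fixed \<open>b\<close>.\<close>
context
  fixes n :: nat and w :: 'a
  assumes n_small: "f lam ^ n < f 2"
    and w_skew: "t w = - w"
    and w_lower: "f lam * (f lam ^ n / f 2) < f w"
    and w_upper: "f w \<le> f lam ^ n / f 2"
begin

lemma scale_pos: "0 < f lam ^ n / f 2"
  using lam_pos by simp

lemma w_nonzero: "w \<noteq> 0"
  using w_lower lam_pos scale_pos by (metis eq_0_iff mult_pos_pos not_less_iff_gr_or_eq zero)

lemma absval_plus_1: "x \<in> Cfilt f t lam n \<Longrightarrow> f (x + 1) = f 2"
  using add_eq_dominant[of "x - 1" 2] n_small unfolding Cfilt_def by (simp add: add.commute)

lemma plus_1_nonzero: "x \<in> Cfilt f t lam n \<Longrightarrow> x + 1 \<noteq> 0"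
  using absval_plus_1[of x] by auto

lemma absval_w_mult_less_1:
  assumes "b \<in> Ofix"
  shows "f (w * b) < 1"
proof -
  have "f (w * b) \<le> f lam ^ n / f 2"
    using scaled_le_iff[OF w_lower w_upper] assms by (simp add: mem_Ofix_iff)
  also have "\<dots> < 1"
    using n_small by simp
  finally show ?thesis .
qed

lemma absval_1_plus_minus_w_mult:
  assumes "b \<in> Ofix"
  shows "f (1 + w * b) = 1" "f (1 - w * b) = 1"
  using add_eq_dominant[of "w * b" 1] add_eq_dominant[of "- (w * b)" 1] absval_w_mult_less_1[OF assms]
  by simp_all

lemma cayley_mem_Cfilt:
  assumes b: "b \<in> Ofix"
  shows "cayley w b \<in> Cfilt f t lam n"
proof -
  have nz: "1 + w * b \<noteq> 0" "1 - w * b \<noteq> 0"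
    using absval_1_plus_minus_w_mult[OF b] by auto
  have "t (cayley w b) = (1 - w * b) / (1 + w * b)"
    using b w_skew unfolding cayley_def by (simp add: mem_Ofix_iff)
  then have "cayley w b * t (cayley w b) = 1"
    using nz unfolding cayley_def by simp
  moreover have "f (cayley w b) = 1"
    using absval_1_plus_minus_w_mult[OF b] unfolding cayley_def by simp
  moreover have "f (cayley w b - 1) \<le> f lam ^ n"
  proof -
    have "f (cayley w b - 1) = f 2 * f (w * b)"
      using nz absval_1_plus_minus_w_mult[OF b] by (simp add: cayley_minus_1)
    also have "\<dots> \<le> f 2 * (f lam ^ n / f 2)"
      using scaled_le_iff[OF w_lower w_upper] b by (intro mult_left_mono) (simp_all add: mem_Ofix_iff)
    finally show ?thesis
      by simp
  qed
  ultimately show ?thesis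
    unfolding Cfilt_def Cgrp_def by simp
qed

lemma cayley_inv_mem_Ofix:
  assumes x: "x \<in> Cfilt f t lam n"
  shows "cayley_inv w x \<in> Ofix"
proof -
  have "x \<in> Cgrp f t"
    using x unfolding Cfilt_def by simp
  then have "t (cayley_inv w x) = cayley_inv (- w) (inverse x)"
    using w_skew Cgrp_t unfolding cayley_inv_def by simp
  also have "\<dots> = cayley_inv w x"
    using Cgrp_nonzero[OF \<open>x \<in> Cgrp f t\<close>] plus_1_nonzero[OF x] by (rule cayley_inv_inverse)
  finally have fixed: "t (cayley_inv w x) = cayley_inv w x" .
  have "f (w * cayley_inv w x) = f (x - 1) / f 2"
    using w_nonzero absval_plus_1[OF x] by (simp add: mult_cayley_inv)
  also have "\<dots> \<le> f lam ^ n / f 2"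
    using x unfolding Cfilt_def by (simp add: divide_right_mono)
  finally show ?thesis
    using scaled_le_iff[OF w_lower w_upper fixed] fixed by (simp add: mem_Ofix_iff)
qed

lemma bij_betw_cayley_inv: "bij_betw (cayley_inv w) (Cfilt f t lam n) Ofix"
proof (rule bij_betw_byWitness[where f' = "cayley w"])
  show "\<forall>x\<in>Cfilt f t lam n. cayley w (cayley_inv w x) = x"
    by (simp add: cayley_cayley_inv[OF w_nonzero] plus_1_nonzero)
  show "\<forall>b\<in>Ofix. cayley_inv w (cayley w b) = b"
  proof
    fix b
    assume "b \<in> Ofix"
    then have "1 + w * b \<noteq> 0" "1 - w * b \<noteq> 0"
      using absval_1_plus_minus_w_mult[of b] by auto
    then show "cayley_inv w (cayley w b) = b"
      by (rule cayley_inv_cayley[OF w_nonzero])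
  qed
qed (use cayley_mem_Cfilt cayley_inv_mem_Ofix in auto)

lemma cayley_inv_close_iff:
  assumes x: "x \<in> Cfilt f t lam n" and x': "x' \<in> Cfilt f t lam n"
  shows "f (cayley_inv w x - cayley_inv w x') < 1 \<longleftrightarrow> f (x - x') \<le> f lam ^ Suc n"
proof -
  let ?D = "cayley_inv w x - cayley_inv w x'"
  have fixed: "t ?D = ?D"
    using cayley_inv_mem_Ofix[OF x] cayley_inv_mem_Ofix[OF x'] by (simp add: mem_Ofix_iff)
  have "w * ?D = 2 * (x - x') / ((x + 1) * (x' + 1))"
    using w_nonzero plus_1_nonzero[OF x] plus_1_nonzero[OF x'] by (rule cayley_inv_diff)
  then have "f (w * ?D) = f 2 * f (x - x') / (f 2 * f 2)"
    by (simp only: divide mult absval_plus_1[OF x] absval_plus_1[OF x'])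
  then have "f (w * ?D) = f (x - x') / f 2"
    by simp
  then show ?thesis
    using scaled_le_lam_iff[OF w_lower w_upper fixed scale_pos] by (simp add: divide_le_cancel)
qed

end

lemma Cquot_bij_residue_classes:
  assumes n_small: "f lam ^ n < f 2"
  shows "\<exists>g. bij_betw g (Cquot f t lam n) (residue_classes f t lam)"
proof -
  obtain w where w: "t w = - w" "f lam * (f lam ^ n / f 2) < f w" "f w \<le> f lam ^ n / f 2"
    using exists_skew_element[of "f lam ^ n / f 2"] lam_pos by auto
  have Cquot_eq: "Cquot f t lam n = (\<lambda>x. {y \<in> Cgrp f t. f (y - x) \<le> f lam ^ Suc n}) ` Cfilt f t lam n"
    unfolding Cquot_def by (rule image_cong[OF refl Cfilt_coset_eq]) (simp add: Cfilt_def)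
  have residue_classes_eq: "residue_classes f t lam = (\<lambda>b. {y \<in> Ofix. f (y - b) < 1}) ` Ofix"
    unfolding residue_classes_def by (rule image_cong[OF refl residue_class_eq])
  have classes: "{y \<in> Cgrp f t. f (y - x) \<le> f lam ^ Suc n} = {y \<in> Cgrp f t. f (y - x') \<le> f lam ^ Suc n}
      \<longleftrightarrow> {y \<in> Ofix. f (y - cayley_inv w x) < 1} = {y \<in> Ofix. f (y - cayley_inv w x') < 1}"
    if "x \<in> Cfilt f t lam n" "x' \<in> Cfilt f t lam n" for x x'
    using that closed_ball_eq_iff[of x "Cgrp f t" x'] open_ball_eq_iff
      cayley_inv_close_iff[OF n_small w that] cayley_inv_mem_Ofix[OF n_small w]
    by (simp add: Cfilt_def)
  show ?thesis
    unfolding Cquot_eq residue_classes_eq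
    using bij_betw_image_classes[OF bij_betw_cayley_inv[OF n_small w],
        of "\<lambda>x. {y \<in> Cgrp f t. f (y - x) \<le> f lam ^ Suc n}" "\<lambda>b. {y \<in> Ofix. f (y - b) < 1}"]
      classes by blast
qed

end

theorem lemma6p2:
  fixes l :: nat and f :: "'a::field_char_0 \<Rightarrow> real" and t :: "'a \<Rightarrow> 'a" and lam :: 'a
  assumes "prime l"
    and "finite_ext_Ql l f"
    and "field_aut_order2 t"
    and "is_uniformizer f t lam"
  shows "(l \<noteq> 2 \<longrightarrow> (\<forall>n::nat. n \<ge> 1 \<longrightarrow>
            finite (Cquot f t lam n) \<and> card (Cquot f t lam n) = card (residue_classes f t lam)))
       \<and> (l = 2 \<longrightarrow> (\<forall>n::nat. f lam ^ n < f 2 \<longrightarrow>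
            finite (Cquot f t lam n) \<and> card (Cquot f t lam n) = card (residue_classes f t lam)))"
proof -
  interpret fixed_field_uniformizer f l t lam
    using assms unfolding finite_ext_Ql_def by unfold_locales auto
  have finite: "finite (residue_classes f t lam)"
    using finite_residue_classes assms(2) unfolding finite_ext_Ql_def by blast
  have count: "finite (Cquot f t lam n) \<and> card (Cquot f t lam n) = card (residue_classes f t lam)"
    if "f lam ^ n < f 2" for n
    using Cquot_bij_residue_classes[OF that] finite bij_betw_finite bij_betw_same_card by blast
  have "f lam ^ n < f 2" if "l \<noteq> 2" "1 \<le> n" for n
    using power_decreasing[of 1 n "f lam"] that two_eq_1 lam_less_1 by simp
  then show ?thesis
    using count by blast
qed

end
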